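(* Let $P^1,\dots,P^4\in\mathbb{R}^n$ be in general position, let $Q^0$ be the equidistant point from $P^1,\dots,P^4$ with barycentric coordinate $\boldsymbol\lambda^0$, and suppose $\lambda^0_1<0$, $\lambda^0_2<0$, $\lambda^0_3\ge0$, $\lambda^0_4\ge0$. Let $Q^{1(1)}=\pi(Q^0|L(P^2,P^3,P^4))$ and $Q^{1(2)}=\pi(Q^0|L(P^1,P^3,P^4))$, with barycentric coordinates $\boldsymbol\lambda^{1(1)},\boldsymbol\lambda^{1(2)}$ about $P^1,\dots,P^4$, and suppose $\lambda^{1(2)}_1<0$. Suppose further $\lambda^{1(1)}_2<0$, $\lambda^{1(1)}_3\ge0$, $\lambda^{1(1)}_4\ge0$, and let $Q^2=\pi(Q^{1(1)}|L(P^3,P^4))$. Then the center of the smallest enclosing circle of $P^1,\dots,P^4$ is $Q^\ast=Q^2$ and its radius is $d^\ast=d(P^3,Q^2)$.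
   Context: $d$ is the Euclidean distance. Points are in general position if $P^2-P^1,\dots,P^m-P^1$ are linearly independent. $L(S^1,\dots,S^r)$ is the affine subspace spanned by the points; $\pi(Q'|L)$ is the orthogonal projection onto the affine subspace $L$. The barycentric coordinate of $Q\in L(P^1,\dots,P^m)$ is the unique $\boldsymbol\lambda$ with $\sum_i\lambda_i=1$, $Q=\sum_i\lambda_iP^i$. The equidistant point is the unique $Q^0\in L(P^1,\dots,P^m)$ with all $d(P^i,Q^0)$ equal. The smallest enclosing circle has center $Q^\ast$ attaining $\min_Q\max_i d(P^i,Q)$ and radius $d^\ast$ equal to this minimum. *)

theory Defs
  imports "HOL-Analysis.Analysis"
begin

definition gen_pos4 :: "(nat \<Rightarrow> 'a::euclidean_space) \<Rightarrow> bool" where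
  "gen_pos4 P \<longleftrightarrow>
     (\<forall>c::nat \<Rightarrow> real. (\<Sum>i\<in>{2,3,4}. c i *\<^sub>R (P i - P 1)) = 0 \<longrightarrow> c 2 = 0 \<and> c 3 = 0 \<and> c 4 = 0)"

definition bary4 :: "(nat \<Rightarrow> 'a::euclidean_space) \<Rightarrow> 'a \<Rightarrow> (nat \<Rightarrow> real) \<Rightarrow> bool" where
  "bary4 P Q l \<longleftrightarrow> (\<Sum>i=1..4. l i) = 1 \<and> Q = (\<Sum>i=1..4. l i *\<^sub>R P i)"

definition equidistant4 :: "(nat \<Rightarrow> 'a::euclidean_space) \<Rightarrow> 'a \<Rightarrow> bool" where
  "equidistant4 P Q \<longleftrightarrow> Q \<in> affine hull (P ` {1..4}) \<and>
     (\<forall>i\<in>{1..4}. \<forall>j\<in>{1..4}. dist (P i) Q = dist (P j) Q)"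

definition proj :: "'a::euclidean_space \<Rightarrow> 'a set \<Rightarrow> 'a" where
  "proj Q S = closest_point (affine hull S) Q"

definition maxdist4 :: "(nat \<Rightarrow> 'a::euclidean_space) \<Rightarrow> 'a \<Rightarrow> real" where
  "maxdist4 P Q = Max ((\<lambda>i. dist (P i) Q) ` {1..4})"

end

theory Submission imports Defs begin

text \<open>
  Since Q0 is equidistant from P 3 and P 4, its projection onto the line through them is their
  midpoint M, and projections onto nested affine subspaces compose, so Q2 = M. If X is the
  projection of Q0 onto the face spanned by P k, P 3, P 4 and the coefficient of P k in X is
  negative, then |X - M|^2 is a negative multiple of the inner product of
  P k - M with X - M; this gives d(P k, M) \<le> d(P 3, M) for k = 1, 2. So the ball of radius
  d(P 3, M) about M contains all four points, and by the parallelogram law every other centre is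
  farther than that from P 3 or from P 4.
\<close>

lemma proj_in_affine_hull:
  assumes "S \<noteq> {}"
  shows "proj x S \<in> affine hull S"
  unfolding proj_def using assms by (simp add: closest_point_in_set)

lemma proj_orthogonal:
  fixes x :: "'a::euclidean_space"
  assumes a: "a \<in> affine hull S" and b: "b \<in> affine hull S"
  shows "inner (x - proj x S) (a - b) = 0"
proof -
  let ?A = "affine hull S" and ?y = "proj x S"
  have y: "?y \<in> ?A"
    using a by (intro proj_in_affine_hull) auto
  have "?y + 1 *\<^sub>R (a - b) \<in> ?A" "?y + (-1) *\<^sub>R (a - b) \<in> ?A"
    using mem_affine_3_minus[OF affine_affine_hull y a b] by blast+
  from this[THEN closest_point_dot[OF affine_imp_convex[OF affine_affine_hull] closed_affine_hull,
        of _ S x]]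
  show ?thesis unfolding proj_def by (simp add: inner_diff_right)
qed

lemma proj_eqI:
  fixes x y :: "'a::euclidean_space"
  assumes y: "y \<in> affine hull S"
    and orth: "\<And>z. z \<in> affine hull S \<Longrightarrow> inner (x - y) (z - y) = 0"
  shows "proj x S = y"
proof -
  have "dist x y \<le> dist x z" if z: "z \<in> affine hull S" for z
  proof (rule power2_le_imp_le)
    have "orthogonal (x - y) (y - z)"
      using orth[OF z] by (simp add: orthogonal_def inner_diff_right)
    then have "(dist x z)\<^sup>2 = (dist x y)\<^sup>2 + (dist y z)\<^sup>2"
      using norm_add_Pythagorean[of "x - y" "y - z"] by (simp add: dist_norm)
    then show "(dist x y)\<^sup>2 \<le> (dist x z)\<^sup>2" by simp
  qed simp
  then show ?thesis
    unfolding proj_def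
    by (intro closest_point_unique[symmetric] affine_imp_convex affine_affine_hull
        closed_affine_hull y) blast
qed

lemma proj_proj_affine_subspace:
  fixes x :: "'a::euclidean_space"
  assumes T: "T \<noteq> {}" and TS: "affine hull T \<subseteq> affine hull S"
  shows "proj (proj x S) T = proj x T"
proof (rule proj_eqI)
  show y: "proj x T \<in> affine hull T"
    using T by (rule proj_in_affine_hull)
  fix z assume z: "z \<in> affine hull T"
  have "inner (x - proj x S) (z - proj x T) = 0"
    using z y TS by (intro proj_orthogonal) auto
  moreover have "inner (x - proj x T) (z - proj x T) = 0"
    using z y by (rule proj_orthogonal)
  ultimately show "inner (proj x S - proj x T) (z - proj x T) = 0"
    by (simp add: inner_diff_left)
qed

lemma midpoint_minus_endpoints:
  fixes a b :: "'a::real_vector"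
  shows "midpoint a b - a = (1 / 2) *\<^sub>R (b - a)" "b - midpoint a b = (1 / 2) *\<^sub>R (b - a)"
  unfolding midpoint_def
  by (simp_all add: algebra_simps) (metis scaleR_add_left field_sum_of_halves scaleR_one)+

lemma dist_sq_diff_eq_inner:
  fixes a b x y :: "'a::real_inner"
  assumes "dist a x = dist b x"
  shows "(dist a y)\<^sup>2 - (dist b y)\<^sup>2 = 2 * inner (a - b) (x - y)"
proof -
  have "(dist a x)\<^sup>2 = (dist b x)\<^sup>2" using assms by simp
  then show ?thesis unfolding dist_norm power2_norm_eq_inner
    by (simp add: inner_diff inner_commute algebra_simps)
qed

lemma dist_sq_sum_midpoint:
  fixes a b x :: "'a::real_inner"
  shows "(dist a x)\<^sup>2 + (dist b x)\<^sup>2 = 2 * (dist (midpoint a b) x)\<^sup>2 + 2 * (dist a (midpoint a b))\<^sup>2"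
  unfolding midpoint_def dist_norm power2_norm_eq_inner
  by (simp add: inner_diff inner_add inner_commute algebra_simps)

lemma proj_equidistant_line:
  fixes a b x :: "'a::euclidean_space"
  assumes "dist a x = dist b x"
  shows "proj x {a, b} = midpoint a b"
proof (rule proj_eqI)
  let ?M = "midpoint a b"
  have "(dist b ?M)\<^sup>2 - (dist a ?M)\<^sup>2 = 0"
    by (simp add: dist_midpoint)
  then have orth: "inner (x - ?M) (b - a) = 0"
    using dist_sq_diff_eq_inner[OF assms[symmetric], of ?M] by (simp add: inner_commute)
  show "?M \<in> affine hull {a, b}"
    unfolding affine_hull_2 midpoint_def by (intro CollectI exI[of _ "1/2"]) (simp add: algebra_simps)
  fix z assume "z \<in> affine hull {a, b}"
  then obtain t where "z = (1 - t) *\<^sub>R a + t *\<^sub>R b"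
    unfolding affine_hull_2 by (auto simp: eq_diff_eq[symmetric])
  then have "z - ?M = (t - 1 / 2) *\<^sub>R (b - a)"
    unfolding midpoint_def by (simp add: algebra_simps) (metis scaleR_add_left field_sum_of_halves scaleR_one)
  then show "inner (x - ?M) (z - ?M) = 0"
    using orth by simp
qed

lemma inner_midpoint_nonpos_of_negative_coeff:
  fixes p a b X :: "'a::real_inner"
  assumes uvw: "u + v + w = 1" and X: "X = u *\<^sub>R p + v *\<^sub>R a + w *\<^sub>R b" and u: "u < 0"
    and orth: "inner (X - midpoint a b) (b - a) = 0"
  shows "inner (p - a) (X - midpoint a b) \<le> 0"
proof -
  let ?M = "midpoint a b"
  have aM: "a - ?M = - ((1 / 2) *\<^sub>R (b - a))" and bM: "b - ?M = (1 / 2) *\<^sub>R (b - a)"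
    using arg_cong[OF midpoint_minus_endpoints(1)[of a b], of uminus] midpoint_minus_endpoints(2)
    by simp_all
  have "X - ?M = u *\<^sub>R p + v *\<^sub>R a + w *\<^sub>R b - (u + v + w) *\<^sub>R ?M"
    using uvw X by simp
  also have "\<dots> = u *\<^sub>R (p - ?M) + v *\<^sub>R (a - ?M) + w *\<^sub>R (b - ?M)"
    by (simp add: algebra_simps)
  finally have dec: "X - ?M = u *\<^sub>R (p - ?M) + v *\<^sub>R (a - ?M) + w *\<^sub>R (b - ?M)" .
  have aM_orth: "inner (a - ?M) (X - ?M) = 0" and bM_orth: "inner (b - ?M) (X - ?M) = 0"
    using orth unfolding aM bM by (simp_all add: inner_commute)
  have "inner (X - ?M) (X - ?M) = u * inner (p - ?M) (X - ?M)"
    by (subst (1) dec) (simp add: inner_add_left aM_orth bM_orth)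
  then have "u * inner (p - ?M) (X - ?M) \<ge> 0"
    using inner_ge_zero[of "X - ?M"] by linarith
  then have "inner (p - ?M) (X - ?M) \<le> 0"
    using u by (simp add: zero_le_mult_iff)
  moreover have "inner (p - a) (X - ?M) = inner (p - ?M) (X - ?M) - inner (a - ?M) (X - ?M)"
    by (simp add: inner_diff_left)
  ultimately show ?thesis using aM_orth by simp
qed

lemma dist_midpoint_le_of_negative_coeff:
  fixes p a b q :: "'a::euclidean_space"
  assumes pq: "dist p q = dist a q" and bq: "dist b q = dist a q"
    and X: "X = proj q {p, a, b}" "X = u *\<^sub>R p + v *\<^sub>R a + w *\<^sub>R b" "u + v + w = 1"
    and u: "u < 0"
  shows "dist p (midpoint a b) \<le> dist a (midpoint a b)"
proof (rule power2_le_imp_le)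
  let ?M = "midpoint a b"
  have "?M = proj q {a, b}"
    using bq by (simp add: proj_equidistant_line)
  also have "\<dots> = proj X {a, b}"
    unfolding X(1) by (rule proj_proj_affine_subspace[symmetric]) (simp_all add: hull_mono subset_insertI)
  finally have "inner (X - ?M) (b - a) = 0"
    by (simp add: proj_orthogonal hull_inc)
  then have "inner (p - a) (X - ?M) \<le> 0"
    using X(2-3) u by (intro inner_midpoint_nonpos_of_negative_coeff)
  moreover have "inner (q - X) (p - a) = 0"
    unfolding X(1) by (simp add: proj_orthogonal hull_inc)
  ultimately have "inner (p - a) (q - ?M) \<le> 0"
    by (simp add: inner_diff_right inner_commute)
  then show "(dist p ?M)\<^sup>2 \<le> (dist a ?M)\<^sup>2"
    using dist_sq_diff_eq_inner[OF pq, of ?M] by linarith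
qed simp

lemma midpoint_minimizes_max_dist:
  fixes a b q :: "'a::real_inner"
  shows "dist a (midpoint a b) \<le> max (dist a q) (dist b q)"
    and "max (dist a q) (dist b q) \<le> dist a (midpoint a b) \<Longrightarrow> q = midpoint a b"
proof -
  let ?r = "dist a (midpoint a b)" and ?m = "max (dist a q) (dist b q)"
  have "(dist a q)\<^sup>2 \<le> ?m\<^sup>2" "(dist b q)\<^sup>2 \<le> ?m\<^sup>2"
    by (intro power_mono; simp)+
  then have le: "?r\<^sup>2 + (dist (midpoint a b) q)\<^sup>2 \<le> ?m\<^sup>2"
    using dist_sq_sum_midpoint[of a q b] by linarith
  then have "?r\<^sup>2 \<le> ?m\<^sup>2"
    using zero_le_power2[of "dist (midpoint a b) q"] by linarith
  then show "?r \<le> ?m"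
    by (rule power2_le_imp_le) (simp add: le_max_iff_disj)
  assume "?m \<le> ?r"
  then have "?m\<^sup>2 \<le> ?r\<^sup>2"
    by (rule power_mono) (simp add: le_max_iff_disj)
  with le have "(dist (midpoint a b) q)\<^sup>2 \<le> 0"
    by linarith
  then show "q = midpoint a b"
    by simp
qed

lemma sum_1_to_4: "(\<Sum>i=1..(4::nat). f i) = f 1 + f 2 + f 3 + (f 4 :: 'b::comm_monoid_add)"
  by (simp add: eval_nat_numeral add.assoc)

lemma gen_pos4_bary4_unique:
  fixes P :: "nat \<Rightarrow> 'a::euclidean_space"
  assumes gp: "gen_pos4 P" and l: "bary4 P Q l" and l': "bary4 P Q l'" and i: "i \<in> {1..4}"
  shows "l i = l' i"
proof -
  define c where "c j = l j - l' j" for j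
  have c1: "c 1 = - (c 2 + c 3 + c 4)"
    using l l' unfolding bary4_def sum_1_to_4 c_def by linarith
  have "(\<Sum>j\<in>{2,3,4}. c j *\<^sub>R (P j - P 1)) = c 1 *\<^sub>R P 1 + c 2 *\<^sub>R P 2 + c 3 *\<^sub>R P 3 + c 4 *\<^sub>R P 4"
    unfolding c1 by (simp add: algebra_simps)
  also have "\<dots> = 0"
    using l l' unfolding bary4_def sum_1_to_4 c_def by (simp add: algebra_simps)
  finally have "c 2 = 0 \<and> c 3 = 0 \<and> c 4 = 0"
    using gp unfolding gen_pos4_def by blast
  with c1 have "c j = 0" if "j \<in> {1..4}" for j
    using that by (auto simp: eval_nat_numeral le_Suc_eq)
  with i show ?thesis
    unfolding c_def by simp
qed

lemma bary4_coeff_in_face: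
  fixes P :: "nat \<Rightarrow> 'a::euclidean_space"
  assumes gp: "gen_pos4 P" and b: "bary4 P X l" and k: "k \<in> {1, 2}"
    and X: "X \<in> affine hull {P k, P 3, P 4}"
  obtains v w where "X = l k *\<^sub>R P k + v *\<^sub>R P 3 + w *\<^sub>R P 4" "l k + v + w = 1"
proof -
  obtain u v w where uvw: "u + v + w = 1" and Xu: "X = u *\<^sub>R P k + v *\<^sub>R P 3 + w *\<^sub>R P 4"
    using X unfolding affine_hull_3 by auto
  let ?l = "\<lambda>i. if i = k then u else if i = 3 then v else if i = 4 then w else 0"
  have "bary4 P X ?l"
    using k uvw Xu unfolding bary4_def sum_1_to_4 by auto
  then have "l k = u"
    using gen_pos4_bary4_unique[OF gp b] k by force
  with uvw Xu show thesis
    by (intro that) simp_all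
qed

lemma maxdist4_eq:
  "maxdist4 P Q = max (dist (P 1) Q) (max (dist (P 2) Q) (max (dist (P 3) Q) (dist (P 4) Q)))"
proof -
  have "{1..4::nat} = {1, 2, 3, 4}" by auto
  then show ?thesis unfolding maxdist4_def by simp
qed

lemma equidistant4_dist:
  assumes "equidistant4 P q" "i \<in> {1..4}" "j \<in> {1..4}"
  shows "dist (P i) q = dist (P j) q"
  using assms unfolding equidistant4_def by blast

lemma face_projection_dist_midpoint_le:
  fixes P :: "nat \<Rightarrow> 'a::euclidean_space"
  assumes gp: "gen_pos4 P" and eq: "equidistant4 P q" and k: "k \<in> {1, 2}"
    and X: "X = proj q {P k, P 3, P 4}" and b: "bary4 P X l" and lk: "l k < 0"
  shows "dist (P k) (midpoint (P 3) (P 4)) \<le> dist (P 3) (midpoint (P 3) (P 4))"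
proof -
  have "X \<in> affine hull {P k, P 3, P 4}"
    unfolding X by (rule proj_in_affine_hull) simp
  then obtain v w where Xvw: "X = l k *\<^sub>R P k + v *\<^sub>R P 3 + w *\<^sub>R P 4" "l k + v + w = 1"
    using bary4_coeff_in_face[OF gp b k] by blast
  have "dist (P k) q = dist (P 3) q" "dist (P 4) q = dist (P 3) q"
    using k by (auto intro: equidistant4_dist[OF eq])
  then show ?thesis
    using dist_midpoint_le_of_negative_coeff[OF _ _ X Xvw lk] by blast
qed

theorem theorem10:
  fixes P :: "nat \<Rightarrow> 'a::euclidean_space"
    and Q0 Q11 Q12 Q2 :: 'a
    and l0 l11 l12 :: "nat \<Rightarrow> real"
  assumes gp: "gen_pos4 P"
    and eq: "equidistant4 P Q0"
    and b0: "bary4 P Q0 l0"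
    and s0: "l0 1 < 0" "l0 2 < 0" "l0 3 \<ge> 0" "l0 4 \<ge> 0"
    and p11: "Q11 = proj Q0 {P 2, P 3, P 4}"
    and p12: "Q12 = proj Q0 {P 1, P 3, P 4}"
    and b11: "bary4 P Q11 l11"
    and b12: "bary4 P Q12 l12"
    and s12: "l12 1 < 0"
    and s11: "l11 2 < 0" "l11 3 \<ge> 0" "l11 4 \<ge> 0"
    and p2: "Q2 = proj Q11 {P 3, P 4}"
  shows "(\<forall>Q. maxdist4 P Q2 \<le> maxdist4 P Q)
       \<and> (\<forall>Q. maxdist4 P Q = maxdist4 P Q2 \<longrightarrow> Q = Q2)
       \<and> maxdist4 P Q2 = dist (P 3) Q2"
proof -
  let ?M = "midpoint (P 3) (P 4)"
  have "Q2 = proj Q0 {P 3, P 4}"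
    unfolding p2 p11 by (rule proj_proj_affine_subspace) (simp_all add: hull_mono subset_insertI)
  also have "\<dots> = ?M"
    using equidistant4_dist[OF eq, of 3 4] by (simp add: proj_equidistant_line)
  finally have Q2: "Q2 = ?M" .
  have "dist (P 1) ?M \<le> dist (P 3) ?M" "dist (P 2) ?M \<le> dist (P 3) ?M"
    using face_projection_dist_midpoint_le[OF gp eq] p12 b12 s12 p11 b11 s11(1) by auto
  then have radius: "maxdist4 P ?M = dist (P 3) ?M"
    by (simp add: maxdist4_eq dist_midpoint max_def)
  have max34: "max (dist (P 3) Q) (dist (P 4) Q) \<le> maxdist4 P Q" for Q
    by (simp add: maxdist4_eq le_max_iff_disj)
  have "maxdist4 P ?M \<le> maxdist4 P Q" for Q
    unfolding radius using midpoint_minimizes_max_dist(1) max34 by (rule order_trans)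
  moreover have "Q = ?M" if "maxdist4 P Q = maxdist4 P ?M" for Q
    using that max34[of Q] unfolding radius by (intro midpoint_minimizes_max_dist(2)) simp
  ultimately show ?thesis
    unfolding Q2 radius by blast
qed

end
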